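(* Consider the two-layer multi-item order fulfillment problem described in the context with a single FDC ($K=1$), fixed costs $f_0,f_1>0$, and time-invariant variable costs $c_{k,t}^i\equiv c_k^i$. Let $w=f_0/f_1$. Let \textsc{Randomized-Cost-Comparison V-Priority} be the following randomized policy. In each period $t$, for each item $i$, set $\hat m_{1,t}^i=\min\{S_t^i,I_{1,t-1}^i\}$ if $c_1^i<c_0^i$ and $\hat m_{1,t}^i=0$ otherwise, and $\hat m_{0,t}^i=S_t^i-\hat m_{1,t}^i$. Let $x_t=\sum_{i=1}^n(c_0^i-c_1^i)\hat m_{1,t}^i$ and draw, independently of everything else, $\theta_t\sim\mathrm{Bernoulli}(p(x_t))$, where \[p(x)=\begin{cases}1,& x\le f_1,\\ \dfrac{f_1^2-(f_0+x)f_0}{f_1^2+(f_0+x)(x-f_1)},& f_1<x\le\max\{f_1,\ f_1^2/f_0-f_0\},\\ 0,& x>\max\{f_1,\ f_1^2/f_0-f_0\}.\end{cases}\] If $\theta_t=1$, fulfill the whole order from the RDC ($m_{0,t}^i=S_t^i$, $m_{1,t}^i=0$); otherwise set $m_{k,t}^i=\hat m_{k,t}^i$. Then \[\mathfrak R_{\mathrm{inv}}(\textsc{Randomized-Cost-Comparison V-Priority})\le\begin{cases}1+\dfrac{1}{1-w+2\sqrt{1-w}},& w<\frac{\sqrt5-1}{2},\\ 1+w,& w\ge\frac{\sqrt5-1}{2}.\end{cases}\]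
   Context: Problem with one FDC (index $1$) and one RDC (index $0$, unlimited inventory). The FDC initially holds $I_{1,0}^i\ge0$ units of item $i\in[n]$, never replenished. In periods $t=1,\dots,T$ an order $\boldsymbol S_t=(S_t^i)_i$ of nonnegative integers arrives; the policy must immediately and irrevocably choose $m_{0,t}^i,m_{1,t}^i\ge0$ with $m_{0,t}^i+m_{1,t}^i=S_t^i$ and $m_{1,t}^i\le I_{1,t-1}^i$, where $I_{1,t}^i=I_{1,0}^i-\sum_{\tau\le t}m_{1,\tau}^i$. Period cost $\sum_{k=0,1}[f_k\mathbb{I}(\sum_im_{k,t}^i>0)+\sum_ic_k^im_{k,t}^i]$; total cost is the sum. Online policies use only fixed costs, initial inventories, the (time-invariant) variable costs and orders up to the current period. $\mathrm{ALG}(I)$ is the expected total cost of the policy on instance $I$ and $\mathrm{OPT}(I)$ the offline optimal total cost. $\mathfrak R_{\mathrm{inv}}(\mathrm{ALG})$ is the supremum of $\mathrm{ALG}(I)/\mathrm{OPT}(I)$ over all $n,T$, initial inventories, nonnegative time-invariant variable costs $c_k^i$ and order sequences. *)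

theory Defs
  imports "HOL-Probability.Probability"
begin

text \<open>Items are indexed by i < n, periods by t in {1..T}.
  Orders: S t i :: nat.  Inventories: I i :: nat.  Variable costs c0 i, c1 i :: real.\<close>

definition period_cost ::
  "nat \<Rightarrow> real \<Rightarrow> real \<Rightarrow> (nat \<Rightarrow> real) \<Rightarrow> (nat \<Rightarrow> real)
   \<Rightarrow> (nat \<Rightarrow> nat) \<Rightarrow> (nat \<Rightarrow> nat) \<Rightarrow> real" where
  "period_cost n f0 f1 c0 c1 m0 m1 =
     (if (\<Sum>i<n. m0 i) > 0 then f0 else 0) + (\<Sum>i<n. c0 i * real (m0 i))
   + (if (\<Sum>i<n. m1 i) > 0 then f1 else 0) + (\<Sum>i<n. c1 i * real (m1 i))"

text \<open>Feasible (offline) plans: m1 t i units of item i shipped from the FDC in period t.\<close>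
definition feasible_plan ::
  "nat \<Rightarrow> nat \<Rightarrow> (nat \<Rightarrow> nat) \<Rightarrow> (nat \<Rightarrow> nat \<Rightarrow> nat) \<Rightarrow> (nat \<Rightarrow> nat \<Rightarrow> nat) \<Rightarrow> bool" where
  "feasible_plan n T I0 S m1 \<longleftrightarrow>
     (\<forall>t\<in>{1..T}. \<forall>i<n. m1 t i \<le> S t i \<and> (\<Sum>\<tau>=1..t. m1 \<tau> i) \<le> I0 i)"

definition plan_cost ::
  "nat \<Rightarrow> nat \<Rightarrow> real \<Rightarrow> real \<Rightarrow> (nat \<Rightarrow> real) \<Rightarrow> (nat \<Rightarrow> real)
   \<Rightarrow> (nat \<Rightarrow> nat \<Rightarrow> nat) \<Rightarrow> (nat \<Rightarrow> nat \<Rightarrow> nat) \<Rightarrow> real" where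
  "plan_cost n T f0 f1 c0 c1 S m1 =
     (\<Sum>t=1..T. period_cost n f0 f1 c0 c1 (\<lambda>i. S t i - m1 t i) (m1 t))"

definition OPT ::
  "nat \<Rightarrow> nat \<Rightarrow> real \<Rightarrow> real \<Rightarrow> (nat \<Rightarrow> real) \<Rightarrow> (nat \<Rightarrow> real)
   \<Rightarrow> (nat \<Rightarrow> nat) \<Rightarrow> (nat \<Rightarrow> nat \<Rightarrow> nat) \<Rightarrow> real" where
  "OPT n T f0 f1 c0 c1 I0 S =
     Inf (plan_cost n T f0 f1 c0 c1 S ` {m1. feasible_plan n T I0 S m1})"

definition p_rand :: "real \<Rightarrow> real \<Rightarrow> real \<Rightarrow> real" where
  "p_rand f0 f1 x =
     (if x \<le> f1 then 1
      else if x \<le> max f1 (f1\<^sup>2 / f0 - f0)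
        then (f1\<^sup>2 - (f0 + x) * f0) / (f1\<^sup>2 + (f0 + x) * (x - f1))
      else 0)"

text \<open>Distribution of the total cost of Randomized-Cost-Comparison V-Priority over
  k remaining periods, starting at period t with FDC inventory I.\<close>
fun rcc_cost ::
  "nat \<Rightarrow> real \<Rightarrow> real \<Rightarrow> (nat \<Rightarrow> real) \<Rightarrow> (nat \<Rightarrow> real) \<Rightarrow> (nat \<Rightarrow> nat \<Rightarrow> nat)
   \<Rightarrow> nat \<Rightarrow> nat \<Rightarrow> (nat \<Rightarrow> nat) \<Rightarrow> real pmf" where
  "rcc_cost n f0 f1 c0 c1 S 0 t I = return_pmf 0"
| "rcc_cost n f0 f1 c0 c1 S (Suc k) t I =
     (let mh1 = (\<lambda>i. if c1 i < c0 i then min (S t i) (I i) else 0);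
          mh0 = (\<lambda>i. S t i - mh1 i);
          x = (\<Sum>i<n. (c0 i - c1 i) * real (mh1 i))
      in bind_pmf (bernoulli_pmf (p_rand f0 f1 x)) (\<lambda>\<theta>.
           if \<theta> then
             map_pmf (\<lambda>r. period_cost n f0 f1 c0 c1 (S t) (\<lambda>i. 0) + r)
               (rcc_cost n f0 f1 c0 c1 S k (Suc t) I)
           else
             map_pmf (\<lambda>r. period_cost n f0 f1 c0 c1 mh0 mh1 + r)
               (rcc_cost n f0 f1 c0 c1 S k (Suc t) (\<lambda>i. I i - mh1 i))))"

definition ALG_rcc ::
  "nat \<Rightarrow> nat \<Rightarrow> real \<Rightarrow> real \<Rightarrow> (nat \<Rightarrow> real) \<Rightarrow> (nat \<Rightarrow> real)
   \<Rightarrow> (nat \<Rightarrow> nat) \<Rightarrow> (nat \<Rightarrow> nat \<Rightarrow> nat) \<Rightarrow> real" where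
  "ALG_rcc n T f0 f1 c0 c1 I0 S =
     measure_pmf.expectation (rcc_cost n f0 f1 c0 c1 S T 1 I0) (\<lambda>r. r)"

definition ratio_bound :: "real \<Rightarrow> real" where
  "ratio_bound w =
     (if w < (sqrt 5 - 1) / 2 then 1 + 1 / (1 - w + 2 * sqrt (1 - w)) else 1 + w)"

end

theory Submission
  imports Defs
begin

text \<open>Fix a feasible offline plan \<open>m\<close> and put \<open>R = ratio_bound (f0 / f1)\<close>. The potential
  \<open>\<Phi> = \<Sum>\<^sub>i (c0 i - c1 i)\<^sup>+ \<cdot> (future FDC usage of item i under m - remaining FDC stock of the policy)\<^sup>+\<close>
  is nonnegative and vanishes at the start, because the plan never ships more than the initial stock.
  In every period the expected cost of the policy plus the expected decrease of \<open>\<Phi>\<close> is at most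
  \<open>R\<close> times the plan's cost in that period; there the plan only has to respect the demand.
  If the plan uses the FDC, this comes down to \<open>p(f0 + x) + (1 - p)(f0 + f1) \<le> R f1\<close>,
  otherwise to \<open>f0 + (1 - p) f1 \<le> R f0 + (R - 1) x\<close>, where \<open>x\<close> is the saving of the tentative
  FDC shipment. With \<open>w = f0 / f1\<close>, \<open>y = x / f1\<close> and \<open>s = sqrt (1 - w)\<close> the choice of \<open>p(x)\<close>
  turns both inequalities into \<open>(y - s\<^sup>2 - s)\<^sup>2 \<ge> 0\<close>. Summing over the periods gives
  \<open>ALG \<le> R \<cdot> cost(m)\<close>.\<close>

section \<open>The randomisation probability\<close>

lemma golden_ratio_equation: "((sqrt 5 - 1) / 2) ^ 2 + (sqrt 5 - 1) / 2 = (1::real)"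
proof -
  have "sqrt 5 * sqrt 5 = (5::real)" by simp
  then show ?thesis by (simp add: power2_eq_square field_simps)
qed

lemma less_golden_ratio_iff:
  fixes w :: real
  assumes "0 \<le> w"
  shows "w < (sqrt 5 - 1) / 2 \<longleftrightarrow> w\<^sup>2 + w < 1"
proof -
  define \<phi> :: real where "\<phi> = (sqrt 5 - 1) / 2"
  have "0 < \<phi>" by (simp add: \<phi>_def real_less_rsqrt)
  have "w\<^sup>2 + w - 1 = (w - \<phi>) * (w + \<phi> + 1)"
    using golden_ratio_equation by (simp add: \<phi>_def[symmetric] power2_eq_square algebra_simps)
  then have "w\<^sup>2 + w < 1 \<longleftrightarrow> (w - \<phi>) * (w + \<phi> + 1) < 0"
    by (metis diff_less_0_iff_less)
  also have "\<dots> \<longleftrightarrow> w < \<phi>"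
    using \<open>0 < \<phi>\<close> assms by (simp add: mult_less_0_iff)
  finally show ?thesis unfolding \<phi>_def by simp
qed

lemma ratio_bound_below_golden_ratio:
  fixes w :: real
  assumes "0 < w" and "w < (sqrt 5 - 1) / 2"
  obtains s where "0 < s" and "w = 1 - s\<^sup>2" and "ratio_bound w = 1 + 1 / (s\<^sup>2 + 2 * s)"
proof
  have "sqrt 5 < (3::real)" by (rule real_less_lsqrt) auto
  then have "w < 1" using assms(2) by simp
  then show "0 < sqrt (1 - w)" and "w = 1 - (sqrt (1 - w))\<^sup>2" by simp_all
  then show "ratio_bound w = 1 + 1 / ((sqrt (1 - w))\<^sup>2 + 2 * sqrt (1 - w))"
    using assms(2) by (simp add: ratio_bound_def)
qed

lemma ratio_bound_ge:
  fixes w :: real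
  assumes "0 < w"
  shows "1 + w \<le> ratio_bound w"
proof (cases "w < (sqrt 5 - 1) / 2")
  case True
  then obtain s where s: "0 < s" "w = 1 - s\<^sup>2" "ratio_bound w = 1 + 1 / (s\<^sup>2 + 2 * s)"
    using ratio_bound_below_golden_ratio assms by blast
  have "1 - (1 - s\<^sup>2) * (s\<^sup>2 + 2 * s) = (s\<^sup>2 + s - 1)\<^sup>2"
    by (simp add: power2_eq_square algebra_simps)
  then have "(1 - s\<^sup>2) * (s\<^sup>2 + 2 * s) \<le> 1"
    by (metis diff_ge_0_iff_ge zero_le_power2)
  moreover have "0 < s\<^sup>2 + 2 * s" using s(1) by (simp add: add_pos_pos)
  ultimately have "1 - s\<^sup>2 \<le> 1 / (s\<^sup>2 + 2 * s)" by (simp add: field_simps)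
  then show ?thesis using s by simp
qed (simp add: ratio_bound_def)

lemma p_rand_bounded:
  fixes f0 f1 x :: real
  assumes "0 < f0" and "0 < f1"
  shows "0 \<le> p_rand f0 f1 x" and "p_rand f0 f1 x \<le> 1"
proof -
  have "0 \<le> p_rand f0 f1 x \<and> p_rand f0 f1 x \<le> 1"
  proof (cases "f1 < x \<and> x \<le> f1\<^sup>2 / f0 - f0")
    case True
    then have "0 \<le> f1\<^sup>2 - (f0 + x) * f0" using assms by (simp add: field_simps)
    moreover have "0 < (f0 + x) * (x - f1)" and "0 < (f0 + x) * f0" using True assms by simp_all
    ultimately have "0 \<le> f1\<^sup>2 - (f0 + x) * f0" and "f1\<^sup>2 - (f0 + x) * f0 < f1\<^sup>2 + (f0 + x) * (x - f1)"
      by linarith+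
    then show ?thesis using True by (simp add: p_rand_def divide_le_eq_1)
  qed (auto simp: p_rand_def)
  then show "0 \<le> p_rand f0 f1 x" and "p_rand f0 f1 x \<le> 1" by simp_all
qed

lemma p_rand_normalize:
  fixes f0 f1 x :: real
  assumes "0 < f0" and "0 < f1"
  shows "p_rand f0 f1 x = p_rand (f0 / f1) 1 (x / f1)"
proof -
  have "f1\<^sup>2 / f0 - f0 = f1 * (1 / (f0 / f1) - f0 / f1)"
    using assms by (simp add: power2_eq_square field_simps)
  then have "max f1 (f1\<^sup>2 / f0 - f0) = f1 * max 1 (1 / (f0 / f1) - f0 / f1)"
    using assms by (simp add: max_mult_distrib_left)
  then have upper: "x \<le> max f1 (f1\<^sup>2 / f0 - f0) \<longleftrightarrow> x / f1 \<le> max 1 (1\<^sup>2 / (f0 / f1) - f0 / f1)"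
    using assms by (simp add: pos_divide_le_eq mult.commute)
  have lower: "x \<le> f1 \<longleftrightarrow> x / f1 \<le> 1" using assms by simp
  have middle: "(f1\<^sup>2 - (f0 + x) * f0) / (f1\<^sup>2 + (f0 + x) * (x - f1))
      = (1\<^sup>2 - (f0 / f1 + x / f1) * (f0 / f1)) / (1\<^sup>2 + (f0 / f1 + x / f1) * (x / f1 - 1))"
  proof -
    have "1\<^sup>2 - (f0 / f1 + x / f1) * (f0 / f1) = (f1\<^sup>2 - (f0 + x) * f0) / f1\<^sup>2"
      and "1\<^sup>2 + (f0 / f1 + x / f1) * (x / f1 - 1) = (f1\<^sup>2 + (f0 + x) * (x - f1)) / f1\<^sup>2"
      using assms by (simp_all add: field_simps power2_eq_square)
    then show ?thesis using assms by simp
  qed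
  show ?thesis unfolding p_rand_def upper lower middle ..
qed

lemma p_rand_middle_bounds:
  fixes w y :: real
  assumes "0 < w" and "1 < y" and "y \<le> 1 / w - w"
  defines "p \<equiv> p_rand w 1 y" and "R \<equiv> ratio_bound w"
  shows "p * (w + y) + (1 - p) * (w + 1) \<le> R" and "w + (1 - p) \<le> R * w + (R - 1) * y"
proof -
  have "w * y \<le> 1 - w * w" using assms(1,3) by (simp add: field_simps)
  moreover have "w < w * y" using assms(1,2) by simp
  ultimately have "w\<^sup>2 + w < 1" by (simp add: power2_eq_square)
  then have "w < (sqrt 5 - 1) / 2" using less_golden_ratio_iff assms(1) by simp
  then obtain s where "0 < s" and w: "w = 1 - s\<^sup>2" and R: "R = 1 + 1 / (s\<^sup>2 + 2 * s)"
    using ratio_bound_below_golden_ratio assms(1) unfolding R_def by blast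
  define K where "K = s\<^sup>2 + 2 * s"
  define D where "D = 1 + (w + y) * (y - 1)"
  have RK: "R = 1 + 1 / K" using R by (simp add: K_def)
  have "0 < K" using \<open>0 < s\<close> by (simp add: K_def add_pos_pos)
  have "0 < (w + y) * (y - 1)" using assms(1,2) by simp
  then have "0 < D" unfolding D_def by simp
  have p: "p = (1 - (w + y) * w) / D"
    using assms(2,3) by (simp add: p_def p_rand_def D_def)
  \<comment> \<open>Both bounds are tight exactly at \<open>y = s\<^sup>2 + s\<close>.\<close>
  have "(1 - w * K) * D - K * (1 - (w + y) * w) * (y - 1) = (y - s\<^sup>2 - s)\<^sup>2"
    unfolding D_def K_def w by (simp add: power2_eq_square algebra_simps)
  then have "K * (1 - (w + y) * w) * (y - 1) \<le> (1 - w * K) * D"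
    by (metis diff_ge_0_iff_ge zero_le_power2)
  then have "(1 - (w + y) * w) * (y - 1) / D \<le> (1 - w * K) / K"
    using \<open>0 < K\<close> \<open>0 < D\<close> by (simp add: field_simps)
  then have "p * (y - 1) \<le> 1 / K - w"
    using \<open>0 < K\<close> by (simp add: p field_simps)
  then show "p * (w + y) + (1 - p) * (w + 1) \<le> R"
    by (simp add: RK algebra_simps)
  have "D - K * (y - 1 + w) = (y - s\<^sup>2 - s)\<^sup>2"
    unfolding D_def K_def w by (simp add: power2_eq_square algebra_simps)
  then have "K * (y - 1 + w) \<le> D" by (metis diff_ge_0_iff_ge zero_le_power2)
  then have "(w + y) * (K * (y - 1 + w)) \<le> (w + y) * D"
    using assms(1,2) by (intro mult_left_mono) auto
  then have "(w + y) * (y - 1 + w) / D \<le> (w + y) / K"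
    using \<open>0 < K\<close> \<open>0 < D\<close> by (simp add: divide_simps mult_ac)
  moreover have "1 - p = (w + y) * (y - 1 + w) / D"
    using \<open>0 < D\<close> by (simp add: p field_simps D_def)
  ultimately have "1 - p \<le> (w + y) / K" by simp
  moreover have "R * w + (R - 1) * y = w + (w + y) / K"
    by (simp add: RK add_divide_distrib algebra_simps)
  ultimately show "w + (1 - p) \<le> R * w + (R - 1) * y" by linarith
qed

lemma p_rand_normalized_bounds:
  fixes w y :: real
  assumes "0 < w" and "0 \<le> y"
  defines "p \<equiv> p_rand w 1 y" and "R \<equiv> ratio_bound w"
  shows "p * (w + y) + (1 - p) * (w + 1) \<le> R" and "w + (1 - p) \<le> R * w + (R - 1) * y"
proof -
  have "1 + w \<le> R" using ratio_bound_ge assms(1) by (simp add: R_def)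
  consider "y \<le> 1" | "1 < y" "y \<le> 1 / w - w" | "1 < y" "1 / w - w < y"
    by linarith
  then have "p * (w + y) + (1 - p) * (w + 1) \<le> R \<and> w + (1 - p) \<le> R * w + (R - 1) * y"
  proof cases
    case 1
    then have "p = 1" by (simp add: p_def p_rand_def)
    moreover have "w \<le> R * w"
      using \<open>1 + w \<le> R\<close> assms(1) by (simp add: mult_le_cancel_right1)
    moreover have "0 \<le> (R - 1) * y"
      using \<open>1 + w \<le> R\<close> assms(1,2) by simp
    ultimately show ?thesis using 1 \<open>1 + w \<le> R\<close> by simp
  next
    case 2
    then show ?thesis using p_rand_middle_bounds assms(1) unfolding p_def R_def by blast
  next
    case 3
    then have "\<not> y \<le> max 1 (1 / w - w)" by simp
    then have "p = 0"
      unfolding p_def p_rand_def by (simp del: max_less_iff_conj le_max_iff_disj)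
    have "1 < w * (w + y)" using 3 assms(1) by (simp add: field_simps)
    also have "\<dots> \<le> (R - 1) * (w + y)"
      using \<open>1 + w \<le> R\<close> assms(1,2) by (intro mult_right_mono) auto
    finally show ?thesis using \<open>p = 0\<close> \<open>1 + w \<le> R\<close> by (simp add: algebra_simps)
  qed
  then show "p * (w + y) + (1 - p) * (w + 1) \<le> R" and "w + (1 - p) \<le> R * w + (R - 1) * y"
    by simp_all
qed

lemma p_rand_ratio_bounds:
  fixes f0 f1 x :: real
  assumes "0 < f0" and "0 < f1" and "0 \<le> x"
  defines "p \<equiv> p_rand f0 f1 x" and "R \<equiv> ratio_bound (f0 / f1)"
  shows "p * (f0 + x) + (1 - p) * (f0 + f1) \<le> R * f1"
    and "f0 + (1 - p) * f1 \<le> R * f0 + (R - 1) * x"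
proof -
  define w where "w = f0 / f1"
  define y where "y = x / f1"
  have p: "p = p_rand w 1 y"
    unfolding p_def w_def y_def by (rule p_rand_normalize[OF assms(1,2)])
  have R: "R = ratio_bound w" by (simp add: R_def w_def)
  have "0 < w" and "0 \<le> y" using assms(1-3) by (simp_all add: w_def y_def)
  note bounds = p_rand_normalized_bounds[OF this, folded p R]
  have f0: "f0 = w * f1" and x: "x = y * f1" using assms(2) by (simp_all add: w_def y_def)
  have "f1 * (p * (w + y) + (1 - p) * (w + 1)) \<le> f1 * R"
    using bounds(1) assms(2) by simp
  then show "p * (f0 + x) + (1 - p) * (f0 + f1) \<le> R * f1"
    unfolding f0 x by (simp add: algebra_simps)
  have "f1 * (w + (1 - p)) \<le> f1 * (R * w + (R - 1) * y)"
    using bounds(2) assms(2) by simp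
  then show "f0 + (1 - p) * f1 \<le> R * f0 + (R - 1) * x"
    unfolding f0 x by (simp add: algebra_simps)
qed

section \<open>One period of the policy\<close>

lemma expectation_map_pmf_add:
  fixes M :: "real pmf"
  assumes "finite (set_pmf M)"
  shows "measure_pmf.expectation (map_pmf (\<lambda>r. a + r) M) (\<lambda>r. r) = a + measure_pmf.expectation M (\<lambda>r. r)"
proof -
  have "measure_pmf.expectation (map_pmf (\<lambda>r. a + r) M) (\<lambda>r. r) = measure_pmf.expectation M (\<lambda>r. a + r)"
    by (rule integral_map_pmf)
  also have "\<dots> = measure_pmf.expectation M (\<lambda>_. a) + measure_pmf.expectation M (\<lambda>r. r)"
    by (rule Bochner_Integration.integral_add) (auto intro: integrable_measure_pmf_finite assms)
  finally show ?thesis by simp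
qed

lemma finite_set_pmf_rcc_cost: "finite (set_pmf (rcc_cost n f0 f1 c0 c1 S k t stock))"
  by (induction k arbitrary: t stock) (auto simp: Let_def)

definition greedy_fdc :: "(nat \<Rightarrow> real) \<Rightarrow> (nat \<Rightarrow> real) \<Rightarrow> (nat \<Rightarrow> nat) \<Rightarrow> (nat \<Rightarrow> nat) \<Rightarrow> nat \<Rightarrow> nat"
  where "greedy_fdc c0 c1 s stock i = (if c1 i < c0 i then min (s i) (stock i) else 0)"

lemma greedy_fdc_le: "greedy_fdc c0 c1 s stock i \<le> s i"
  by (simp add: greedy_fdc_def)

lemma greedy_saving_nonneg: "0 \<le> (\<Sum>i<n. (c0 i - c1 i) * real (greedy_fdc c0 c1 s stock i))"
  by (rule sum_nonneg) (simp add: greedy_fdc_def)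

lemma expectation_rcc_cost_Suc:
  fixes f0 f1 :: real and c0 c1 :: "nat \<Rightarrow> real" and S :: "nat \<Rightarrow> nat \<Rightarrow> nat"
    and n t :: nat and stock :: "nat \<Rightarrow> nat"
  assumes "0 < f0" and "0 < f1"
  defines "h \<equiv> greedy_fdc c0 c1 (S t) stock"
  defines "p \<equiv> p_rand f0 f1 (\<Sum>i<n. (c0 i - c1 i) * real (h i))"
  shows "measure_pmf.expectation (rcc_cost n f0 f1 c0 c1 S (Suc k) t stock) (\<lambda>r. r)
    = p * (period_cost n f0 f1 c0 c1 (S t) (\<lambda>i. 0)
           + measure_pmf.expectation (rcc_cost n f0 f1 c0 c1 S k (Suc t) stock) (\<lambda>r. r))
    + (1 - p) * (period_cost n f0 f1 c0 c1 (\<lambda>i. S t i - h i) h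
           + measure_pmf.expectation (rcc_cost n f0 f1 c0 c1 S k (Suc t) (\<lambda>i. stock i - h i)) (\<lambda>r. r))"
proof -
  have h: "(\<lambda>i. if c1 i < c0 i then min (S t i) (stock i) else 0) = h"
    by (simp add: h_def greedy_fdc_def fun_eq_iff)
  have "0 \<le> p" and "p \<le> 1" using p_rand_bounded assms(1,2) by (simp_all add: p_def)
  then show ?thesis
    unfolding rcc_cost.simps Let_def h p_def[symmetric]
    by (subst pmf_expectation_bind[of UNIV])
       (auto simp: UNIV_bool expectation_map_pmf_add finite_set_pmf_rcc_cost algebra_simps
             simp del: integral_map_pmf)
qed

definition fdc_gain :: "(nat \<Rightarrow> real) \<Rightarrow> (nat \<Rightarrow> real) \<Rightarrow> nat \<Rightarrow> real"
  where "fdc_gain c0 c1 i = max 0 (c0 i - c1 i)"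

lemma variable_cost_eq:
  fixes s m :: "nat \<Rightarrow> nat"
  assumes "\<forall>i<n. m i \<le> s i"
  shows "(\<Sum>i<n. c0 i * real (s i - m i)) + (\<Sum>i<n. c1 i * real (m i))
    = (\<Sum>i<n. c0 i * real (s i)) - (\<Sum>i<n. (c0 i - c1 i) * real (m i))"
proof -
  have "(\<Sum>i<n. c0 i * real (s i - m i)) = (\<Sum>i<n. c0 i * real (s i) - c0 i * real (m i))"
    using assms by (intro sum.cong) (auto simp: of_nat_diff algebra_simps)
  then show ?thesis by (simp add: sum_subtractf left_diff_distrib sum.distrib)
qed

lemma greedy_saving_le:
  assumes "\<forall>i<n. 0 \<le> c0 i \<and> 0 \<le> c1 i"
  shows "(\<Sum>i<n. (c0 i - c1 i) * real (greedy_fdc c0 c1 s stock i)) \<le> (\<Sum>i<n. c0 i * real (s i))"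
proof (rule sum_mono)
  fix i assume "i \<in> {..<n}"
  then have "(c0 i - c1 i) * real (greedy_fdc c0 c1 s stock i) \<le> c0 i * real (greedy_fdc c0 c1 s stock i)"
    and "c0 i * real (greedy_fdc c0 c1 s stock i) \<le> c0 i * real (s i)"
    using assms greedy_fdc_le[of c0 c1 s stock i] by (auto intro: mult_right_mono mult_left_mono)
  then show "(c0 i - c1 i) * real (greedy_fdc c0 c1 s stock i) \<le> c0 i * real (s i)" by linarith
qed

lemma saving_le_gain: "(\<Sum>i<n. (c0 i - c1 i) * real (m i)) \<le> (\<Sum>i<n. fdc_gain c0 c1 i * real (m i))"
  by (rule sum_mono) (simp add: fdc_gain_def mult_right_mono)

lemma gain_shared_with_greedy:
  fixes n :: nat and c0 c1 :: "nat \<Rightarrow> real" and s stock m :: "nat \<Rightarrow> nat"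
  defines "h \<equiv> greedy_fdc c0 c1 s stock"
  defines "z \<equiv> \<Sum>i<n. fdc_gain c0 c1 i * real (m i)"
    and "b \<equiv> \<Sum>i<n. fdc_gain c0 c1 i * max 0 (real (m i) - real (h i))"
  shows "0 \<le> z - b" and "z - b \<le> (\<Sum>i<n. (c0 i - c1 i) * real (h i))"
proof -
  have "z - b = (\<Sum>i<n. fdc_gain c0 c1 i * min (real (m i)) (real (h i)))"
    unfolding z_def b_def sum_subtractf[symmetric]
    by (intro sum.cong) (simp_all add: right_diff_distrib[symmetric] min_def max_def)
  moreover have "fdc_gain c0 c1 i * min (real (m i)) (real (h i)) \<le> (c0 i - c1 i) * real (h i)" for i
    by (auto simp: fdc_gain_def h_def greedy_fdc_def intro: mult_left_mono)
  ultimately show "0 \<le> z - b" and "z - b \<le> (\<Sum>i<n. (c0 i - c1 i) * real (h i))"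
    by (simp_all add: sum_mono sum_nonneg fdc_gain_def)
qed

lemma period_cost_rdc_only_le:
  "0 \<le> f0 \<Longrightarrow> period_cost n f0 f1 c0 c1 s (\<lambda>i. 0) \<le> f0 + (\<Sum>i<n. c0 i * real (s i))"
  by (simp add: period_cost_def)

lemma period_cost_greedy_le:
  fixes f0 f1 :: real and c0 c1 :: "nat \<Rightarrow> real" and s stock :: "nat \<Rightarrow> nat"
  assumes "0 \<le> f0" and "0 \<le> f1"
  defines "h \<equiv> greedy_fdc c0 c1 s stock"
  shows "period_cost n f0 f1 c0 c1 (\<lambda>i. s i - h i) h
    \<le> f0 + f1 + (\<Sum>i<n. c0 i * real (s i)) - (\<Sum>i<n. (c0 i - c1 i) * real (h i))"
  using variable_cost_eq[of n h s c0 c1] greedy_fdc_le assms(1,2)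
  by (simp add: period_cost_def h_def)

lemma period_cost_step:
  fixes f0 f1 :: real and c0 c1 :: "nat \<Rightarrow> real" and s stock m :: "nat \<Rightarrow> nat"
  assumes "0 < f0" and "0 < f1" and nonneg: "\<forall>i<n. 0 \<le> c0 i \<and> 0 \<le> c1 i"
    and m_le: "\<forall>i<n. m i \<le> s i"
  defines "h \<equiv> greedy_fdc c0 c1 s stock"
  defines "x \<equiv> \<Sum>i<n. (c0 i - c1 i) * real (h i)"
    and "z \<equiv> \<Sum>i<n. fdc_gain c0 c1 i * real (m i)"
    and "b \<equiv> \<Sum>i<n. fdc_gain c0 c1 i * max 0 (real (m i) - real (h i))"
  defines "p \<equiv> p_rand f0 f1 x" and "R \<equiv> ratio_bound (f0 / f1)"
  shows "p * (period_cost n f0 f1 c0 c1 s (\<lambda>i. 0) - b)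
      + (1 - p) * (period_cost n f0 f1 c0 c1 (\<lambda>i. s i - h i) h + x - z)
    \<le> R * period_cost n f0 f1 c0 c1 (\<lambda>i. s i - m i) m"
proof -
  define A where "A = (\<Sum>i<n. c0 i * real (s i))"
  define V where "V = (\<Sum>i<n. c0 i * real (s i - m i)) + (\<Sum>i<n. c1 i * real (m i))"
  have "0 \<le> p" and "p \<le> 1" using p_rand_bounded assms(1,2) by (simp_all add: p_def)
  have "0 < f0 / f1" using assms(1,2) by simp
  then have "1 \<le> R" using ratio_bound_ge[of "f0 / f1"] by (simp add: R_def)
  have "0 \<le> x" and "x \<le> A"
    using greedy_saving_nonneg greedy_saving_le[OF nonneg] by (simp_all add: x_def h_def A_def)
  have "0 \<le> z - b" and "z - b \<le> x"
    using gain_shared_with_greedy unfolding x_def z_def b_def h_def by blast+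
  have "0 \<le> V" unfolding V_def using nonneg by (intro add_nonneg_nonneg sum_nonneg) simp_all
  have "A - z \<le> V"
    using variable_cost_eq[OF m_le] saving_le_gain by (simp add: V_def A_def z_def)
  have rdc: "period_cost n f0 f1 c0 c1 s (\<lambda>i. 0) \<le> f0 + A"
    using period_cost_rdc_only_le assms(1) by (simp add: A_def)
  have greedy: "period_cost n f0 f1 c0 c1 (\<lambda>i. s i - h i) h \<le> f0 + f1 + A - x"
    using period_cost_greedy_le assms(1,2) by (simp add: A_def x_def h_def)
  have plan: "period_cost n f0 f1 c0 c1 (\<lambda>i. s i - m i) m
      = (if 0 < (\<Sum>i<n. s i - m i) then f0 else 0) + (if 0 < (\<Sum>i<n. m i) then f1 else 0) + V"
    by (simp add: period_cost_def V_def)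
  consider (fdc) "0 < (\<Sum>i<n. m i)" | (rdc_only) "\<forall>i<n. m i = 0" "0 < (\<Sum>i<n. s i)"
    | (no_order) "\<forall>i<n. s i = 0"
    using m_le by fastforce
  then show ?thesis
  proof cases
    case fdc
    have "p * (period_cost n f0 f1 c0 c1 s (\<lambda>i. 0) - b)
        + (1 - p) * (period_cost n f0 f1 c0 c1 (\<lambda>i. s i - h i) h + x - z)
      \<le> p * (f0 + x + (A - z)) + (1 - p) * (f0 + f1 + (A - z))"
      using rdc greedy \<open>z - b \<le> x\<close> \<open>0 \<le> p\<close> \<open>p \<le> 1\<close>
      by (intro add_mono mult_left_mono) auto
    also have "\<dots> = p * (f0 + x) + (1 - p) * (f0 + f1) + (A - z)" by (simp add: algebra_simps)
    also have "\<dots> \<le> R * f1 + R * V"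
      using p_rand_ratio_bounds(1)[OF assms(1,2) \<open>0 \<le> x\<close>] \<open>A - z \<le> V\<close>
        mult_right_mono[OF \<open>1 \<le> R\<close> \<open>0 \<le> V\<close>]
      unfolding p_def R_def by linarith
    also have "\<dots> \<le> R * period_cost n f0 f1 c0 c1 (\<lambda>i. s i - m i) m"
      using fdc plan assms(1) \<open>1 \<le> R\<close> by (simp add: distrib_left[symmetric])
    finally show ?thesis .
  next
    case rdc_only
    then have "z = 0" and "b = 0" and "V = A" by (simp_all add: z_def b_def V_def A_def)
    have "p * period_cost n f0 f1 c0 c1 s (\<lambda>i. 0)
        + (1 - p) * (period_cost n f0 f1 c0 c1 (\<lambda>i. s i - h i) h + x)
      \<le> p * (f0 + A) + (1 - p) * (f0 + f1 + A)"
      using mult_left_mono[OF rdc \<open>0 \<le> p\<close>] greedy \<open>p \<le> 1\<close>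
        mult_left_mono[of "period_cost n f0 f1 c0 c1 (\<lambda>i. s i - h i) h + x" "f0 + f1 + A" "1 - p"]
      by linarith
    also have "\<dots> = f0 + (1 - p) * f1 + A" by (simp add: algebra_simps)
    also have "\<dots> \<le> R * f0 + (R - 1) * A + A"
      using p_rand_ratio_bounds(2)[OF assms(1,2) \<open>0 \<le> x\<close>] \<open>x \<le> A\<close> \<open>1 \<le> R\<close>
        mult_left_mono[of x A "R - 1"]
      unfolding p_def R_def by linarith
    also have "\<dots> = R * period_cost n f0 f1 c0 c1 (\<lambda>i. s i - m i) m"
      using rdc_only plan \<open>V = A\<close> by (simp add: algebra_simps)
    finally show ?thesis using \<open>z = 0\<close> \<open>b = 0\<close> by simp
  next
    case no_order
    then have "h i = 0" and "m i = 0" if "i < n" for i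
      using that m_le greedy_fdc_le[of c0 c1 s stock i] by (auto simp: h_def)
    then show ?thesis using no_order by (simp add: period_cost_def x_def z_def b_def)
  qed
qed

section \<open>The potential\<close>

definition fdc_usage :: "(nat \<Rightarrow> nat \<Rightarrow> nat) \<Rightarrow> nat \<Rightarrow> nat \<Rightarrow> nat \<Rightarrow> nat"
  where "fdc_usage m t k i = (\<Sum>\<tau>\<in>{t..<t + k}. m \<tau> i)"

definition potential ::
  "nat \<Rightarrow> (nat \<Rightarrow> real) \<Rightarrow> (nat \<Rightarrow> real) \<Rightarrow> (nat \<Rightarrow> nat \<Rightarrow> nat) \<Rightarrow> nat \<Rightarrow> nat \<Rightarrow> (nat \<Rightarrow> nat) \<Rightarrow> real"
  where "potential n c0 c1 m t k stock =
    (\<Sum>i<n. fdc_gain c0 c1 i * max 0 (real (fdc_usage m t k i) - real (stock i)))"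

definition partial_plan_cost ::
  "nat \<Rightarrow> real \<Rightarrow> real \<Rightarrow> (nat \<Rightarrow> real) \<Rightarrow> (nat \<Rightarrow> real) \<Rightarrow> (nat \<Rightarrow> nat \<Rightarrow> nat)
   \<Rightarrow> (nat \<Rightarrow> nat \<Rightarrow> nat) \<Rightarrow> nat \<Rightarrow> nat \<Rightarrow> real"
  where "partial_plan_cost n f0 f1 c0 c1 S m t k =
    (\<Sum>\<tau>\<in>{t..<t + k}. period_cost n f0 f1 c0 c1 (\<lambda>i. S \<tau> i - m \<tau> i) (m \<tau>))"

lemma fdc_usage_Suc: "fdc_usage m t (Suc k) i = m t i + fdc_usage m (Suc t) k i"
  unfolding fdc_usage_def by (subst sum.atLeast_Suc_lessThan) auto

lemma partial_plan_cost_Suc: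
  "partial_plan_cost n f0 f1 c0 c1 S m t (Suc k)
    = period_cost n f0 f1 c0 c1 (\<lambda>i. S t i - m t i) (m t) + partial_plan_cost n f0 f1 c0 c1 S m (Suc t) k"
  unfolding partial_plan_cost_def by (subst sum.atLeast_Suc_lessThan) auto

lemma potential_nonneg: "0 \<le> potential n c0 c1 m t k stock"
  unfolding potential_def by (rule sum_nonneg) (simp add: fdc_gain_def)

lemma shortage_after_greedy:
  fixes q a s stock :: nat
  assumes "a \<le> s"
  shows "max 0 (real q - real (stock - min s stock))
    \<le> max 0 (real (a + q) - real stock) + (real (min s stock) - real a)"
  using assms by (cases "s \<le> stock") (auto simp: min_def max_def of_nat_diff)

lemma shortage_after_rdc:
  fixes q a s stock :: nat
  assumes "a \<le> s"
  shows "max 0 (real q - real stock) + max 0 (real a - real (min s stock))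
    \<le> max 0 (real (a + q) - real stock)"
  using assms by (cases "s \<le> stock") (auto simp: min_def max_def of_nat_diff)

lemma potential_greedy_step:
  fixes c0 c1 :: "nat \<Rightarrow> real" and m :: "nat \<Rightarrow> nat \<Rightarrow> nat" and s stock :: "nat \<Rightarrow> nat"
  assumes "\<forall>i<n. m t i \<le> s i"
  defines "h \<equiv> greedy_fdc c0 c1 s stock"
  shows "potential n c0 c1 m (Suc t) k (\<lambda>i. stock i - h i)
    \<le> potential n c0 c1 m t (Suc k) stock + (\<Sum>i<n. (c0 i - c1 i) * real (h i))
      - (\<Sum>i<n. fdc_gain c0 c1 i * real (m t i))"
proof -
  have "fdc_gain c0 c1 i * max 0 (real (fdc_usage m (Suc t) k i) - real (stock i - h i))
    \<le> fdc_gain c0 c1 i * max 0 (real (fdc_usage m t (Suc k) i) - real (stock i))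
      + ((c0 i - c1 i) * real (h i) - fdc_gain c0 c1 i * real (m t i))" if "i < n" for i
  proof (cases "c1 i < c0 i")
    case True
    then have "(c0 i - c1 i) * max 0 (real (fdc_usage m (Suc t) k i) - real (stock i - h i))
      \<le> (c0 i - c1 i) * (max 0 (real (fdc_usage m t (Suc k) i) - real (stock i))
        + (real (h i) - real (m t i)))"
      using shortage_after_greedy[of "m t i" "s i" "fdc_usage m (Suc t) k i" "stock i"] assms(1) that
      by (intro mult_left_mono) (simp_all add: h_def greedy_fdc_def fdc_usage_Suc)
    then show ?thesis using True by (simp add: fdc_gain_def algebra_simps)
  qed (simp add: fdc_gain_def h_def greedy_fdc_def)
  then have "potential n c0 c1 m (Suc t) k (\<lambda>i. stock i - h i)
    \<le> (\<Sum>i<n. fdc_gain c0 c1 i * max 0 (real (fdc_usage m t (Suc k) i) - real (stock i))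
      + ((c0 i - c1 i) * real (h i) - fdc_gain c0 c1 i * real (m t i)))"
    unfolding potential_def by (intro sum_mono) simp
  then show ?thesis by (simp add: potential_def sum.distrib sum_subtractf)
qed

lemma potential_rdc_step:
  fixes c0 c1 :: "nat \<Rightarrow> real" and m :: "nat \<Rightarrow> nat \<Rightarrow> nat" and s stock :: "nat \<Rightarrow> nat"
  assumes "\<forall>i<n. m t i \<le> s i"
  defines "h \<equiv> greedy_fdc c0 c1 s stock"
  shows "potential n c0 c1 m (Suc t) k stock
    \<le> potential n c0 c1 m t (Suc k) stock - (\<Sum>i<n. fdc_gain c0 c1 i * max 0 (real (m t i) - real (h i)))"
proof -
  have "fdc_gain c0 c1 i * max 0 (real (fdc_usage m (Suc t) k i) - real (stock i))
    \<le> fdc_gain c0 c1 i * max 0 (real (fdc_usage m t (Suc k) i) - real (stock i))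
      - fdc_gain c0 c1 i * max 0 (real (m t i) - real (h i))" if "i < n" for i
  proof (cases "c1 i < c0 i")
    case True
    then have "(c0 i - c1 i) * (max 0 (real (fdc_usage m (Suc t) k i) - real (stock i))
        + max 0 (real (m t i) - real (h i)))
      \<le> (c0 i - c1 i) * max 0 (real (fdc_usage m t (Suc k) i) - real (stock i))"
      using shortage_after_rdc[of "m t i" "s i" "fdc_usage m (Suc t) k i" "stock i"] assms(1) that
      by (intro mult_left_mono) (simp_all add: h_def greedy_fdc_def fdc_usage_Suc)
    then show ?thesis using True by (simp add: fdc_gain_def algebra_simps)
  qed (simp add: fdc_gain_def)
  then have "potential n c0 c1 m (Suc t) k stock
    \<le> (\<Sum>i<n. fdc_gain c0 c1 i * max 0 (real (fdc_usage m t (Suc k) i) - real (stock i))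
      - fdc_gain c0 c1 i * max 0 (real (m t i) - real (h i)))"
    unfolding potential_def by (intro sum_mono) simp
  then show ?thesis by (simp add: potential_def sum_subtractf)
qed

lemma expected_rcc_cost_le:
  fixes f0 f1 :: real and c0 c1 :: "nat \<Rightarrow> real" and S m :: "nat \<Rightarrow> nat \<Rightarrow> nat"
  assumes "0 < f0" and "0 < f1" and nonneg: "\<forall>i<n. 0 \<le> c0 i \<and> 0 \<le> c1 i"
    and "\<forall>\<tau> i. t \<le> \<tau> \<and> \<tau> < t + k \<and> i < n \<longrightarrow> m \<tau> i \<le> S \<tau> i"
  shows "measure_pmf.expectation (rcc_cost n f0 f1 c0 c1 S k t stock) (\<lambda>r. r)
    \<le> ratio_bound (f0 / f1) * partial_plan_cost n f0 f1 c0 c1 S m t k + potential n c0 c1 m t k stock"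
  using assms(4)
proof (induction k arbitrary: t stock)
  case 0
  then show ?case using potential_nonneg by (simp add: partial_plan_cost_def)
next
  case (Suc k)
  define R where "R = ratio_bound (f0 / f1)"
  define h where "h = greedy_fdc c0 c1 (S t) stock"
  define x where "x = (\<Sum>i<n. (c0 i - c1 i) * real (h i))"
  define z where "z = (\<Sum>i<n. fdc_gain c0 c1 i * real (m t i))"
  define b where "b = (\<Sum>i<n. fdc_gain c0 c1 i * max 0 (real (m t i) - real (h i)))"
  define p where "p = p_rand f0 f1 x"
  define E where "E stock' = measure_pmf.expectation (rcc_cost n f0 f1 c0 c1 S k (Suc t) stock') (\<lambda>r. r)"
    for stock'
  define P where "P = partial_plan_cost n f0 f1 c0 c1 S m (Suc t) k"
  define \<Phi> where "\<Phi> = potential n c0 c1 m t (Suc k) stock"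
  define C\<^sub>0 where "C\<^sub>0 = period_cost n f0 f1 c0 c1 (S t) (\<lambda>i. 0)"
  define C\<^sub>h where "C\<^sub>h = period_cost n f0 f1 c0 c1 (\<lambda>i. S t i - h i) h"
  have m_le: "\<forall>i<n. m t i \<le> S t i" using Suc.prems by auto
  have later: "\<forall>\<tau> i. Suc t \<le> \<tau> \<and> \<tau> < Suc t + k \<and> i < n \<longrightarrow> m \<tau> i \<le> S \<tau> i"
    using Suc.prems by auto
  have "0 \<le> p" and "p \<le> 1" using p_rand_bounded assms(1,2) by (simp_all add: p_def)
  have "E stock \<le> R * P + \<Phi> - b"
    using Suc.IH[OF later, of stock] potential_rdc_step[of n m t "S t" c0 c1 k stock, OF m_le]
    unfolding E_def R_def P_def \<Phi>_def b_def h_def by linarith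
  moreover have "E (\<lambda>i. stock i - h i) \<le> R * P + \<Phi> + x - z"
    using Suc.IH[OF later, of "\<lambda>i. stock i - h i"] potential_greedy_step[of n m t "S t" c0 c1 k stock, OF m_le]
    unfolding E_def R_def P_def \<Phi>_def x_def z_def h_def by linarith
  ultimately have "p * (C\<^sub>0 + E stock) + (1 - p) * (C\<^sub>h + E (\<lambda>i. stock i - h i))
    \<le> p * (C\<^sub>0 - b) + (1 - p) * (C\<^sub>h + x - z) + R * P + \<Phi>"
    using mult_left_mono[of "E stock" "R * P + \<Phi> - b" p]
      mult_left_mono[of "E (\<lambda>i. stock i - h i)" "R * P + \<Phi> + x - z" "1 - p"]
      \<open>0 \<le> p\<close> \<open>p \<le> 1\<close>
    by (simp add: algebra_simps)
  also have "\<dots> \<le> R * period_cost n f0 f1 c0 c1 (\<lambda>i. S t i - m t i) (m t) + R * P + \<Phi>"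
    using period_cost_step[OF assms(1,2) nonneg m_le, of stock]
    by (simp add: C\<^sub>0_def C\<^sub>h_def R_def p_def x_def z_def b_def h_def)
  finally show ?case
    using expectation_rcc_cost_Suc[OF assms(1,2), of n c0 c1 S k t stock]
    by (simp add: partial_plan_cost_Suc distrib_left E_def C\<^sub>0_def C\<^sub>h_def p_def x_def h_def R_def P_def \<Phi>_def)
qed

lemma potential_feasible_plan:
  assumes "feasible_plan n T I0 S m"
  shows "potential n c0 c1 m 1 T I0 = 0"
proof -
  have "fdc_usage m 1 T i \<le> I0 i" if "i < n" for i
  proof (cases T)
    case (Suc T')
    then have "T \<in> {1..T}" by simp
    then have "(\<Sum>\<tau>=1..T. m \<tau> i) \<le> I0 i" using assms that unfolding feasible_plan_def by blast
    then show ?thesis by (simp add: fdc_usage_def atLeastLessThanSuc_atLeastAtMost Suc)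
  qed (simp add: fdc_usage_def)
  then show ?thesis unfolding potential_def by (auto intro!: sum.neutral)
qed

lemma ALG_rcc_le_plan_cost:
  fixes f0 f1 :: real
  assumes "0 < f0" and "0 < f1" and "\<forall>i<n. 0 \<le> c0 i \<and> 0 \<le> c1 i"
    and "feasible_plan n T I0 S m"
  shows "ALG_rcc n T f0 f1 c0 c1 I0 S \<le> ratio_bound (f0 / f1) * plan_cost n T f0 f1 c0 c1 S m"
proof -
  have "\<forall>\<tau> i. 1 \<le> \<tau> \<and> \<tau> < 1 + T \<and> i < n \<longrightarrow> m \<tau> i \<le> S \<tau> i"
    using assms(4) unfolding feasible_plan_def by auto
  moreover have "partial_plan_cost n f0 f1 c0 c1 S m 1 T = plan_cost n T f0 f1 c0 c1 S m"
    by (simp add: partial_plan_cost_def plan_cost_def atLeastLessThanSuc_atLeastAtMost)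
  ultimately show ?thesis
    using expected_rcc_cost_le[OF assms(1-3), of 1 T m S I0] potential_feasible_plan[OF assms(4)]
    by (simp add: ALG_rcc_def)
qed

theorem theorem8:
  fixes f0 f1 :: real
  assumes "f0 > 0" and "f1 > 0"
  shows "\<forall>(n::nat) (T::nat) (I0::nat \<Rightarrow> nat) (c0::nat \<Rightarrow> real) (c1::nat \<Rightarrow> real)
            (S::nat \<Rightarrow> nat \<Rightarrow> nat).
           (\<forall>i<n. c0 i \<ge> 0 \<and> c1 i \<ge> 0) \<longrightarrow>
           ALG_rcc n T f0 f1 c0 c1 I0 S
             \<le> ratio_bound (f0 / f1) * OPT n T f0 f1 c0 c1 I0 S"
proof (intro allI impI)
  fix n T :: nat and I0 :: "nat \<Rightarrow> nat" and c0 c1 :: "nat \<Rightarrow> real" and S :: "nat \<Rightarrow> nat \<Rightarrow> nat"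
  assume nonneg: "\<forall>i<n. c0 i \<ge> 0 \<and> c1 i \<ge> 0"
  define R where "R = ratio_bound (f0 / f1)"
  have "0 < f0 / f1" using assms by simp
  then have "0 < R" using ratio_bound_ge[of "f0 / f1"] by (simp add: R_def)
  have "feasible_plan n T I0 S (\<lambda>_ _. 0)" by (simp add: feasible_plan_def)
  then have "plan_cost n T f0 f1 c0 c1 S ` {m. feasible_plan n T I0 S m} \<noteq> {}" by blast
  moreover have "ALG_rcc n T f0 f1 c0 c1 I0 S / R \<le> plan_cost n T f0 f1 c0 c1 S m"
    if "feasible_plan n T I0 S m" for m
    using ALG_rcc_le_plan_cost[OF assms nonneg that] \<open>0 < R\<close>
    by (simp add: R_def pos_divide_le_eq mult.commute)
  ultimately have "ALG_rcc n T f0 f1 c0 c1 I0 S / R \<le> OPT n T f0 f1 c0 c1 I0 S"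
    unfolding OPT_def by (auto intro: cInf_greatest)
  then show "ALG_rcc n T f0 f1 c0 c1 I0 S \<le> R * OPT n T f0 f1 c0 c1 I0 S"
    using \<open>0 < R\<close> by (simp add: pos_divide_le_eq mult.commute)
qed

end
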